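(* Let $C^{u}(x,y,t;z)=\sum_{\nu\in\mathcal{CP}^{u}}x^{v(\nu)}y^{h(\nu)}t^{a(\nu)}z^{c(\nu)}$ and let $$z_0=z_0(x,y)=\frac{1+y-x-\sqrt{(1+y-x)^2-4y}}{2y}.$$ Then $$C^{u}(x,y,1;z)=\frac{xy(z_0-z)+\frac{x^2y^2z(1-z)}{(1-yz)^2-x}-\frac{x^2y^2z_0(1-z_0)}{(1-yz_0)^2-x}}{(1-z)(1-yz)+xz}.$$
   Context: A cell is a unit square in the plane whose center is an integer point and whose sides are parallel to the axes. A polyomino is a finite set of cells which is connected under edge-adjacency; polyominoes are considered up to translation. A column (resp. row) is the set of cells whose centers have a fixed $x$- (resp. $y$-) coordinate; a polyomino is convex if each column and each row is a contiguous block of cells. Number the columns $1,2,\dots$ from left to right; $u(\nu,j)$ denotes the height (center $y$-coordinate) of the top cell of column $j$. $\mathcal{CP}^{u}$ is the set of nonempty convex polyominoes $\nu$ such that for every column $j$ and every $s\ge j+1$, $u(\nu,s)\le u(\nu,j)$. For $\nu$: $v(\nu)$ = number of columns, $h(\nu)$ = number of rows, $a(\nu)$ = number of cells, $c(\nu)$ = number of cells in the first (leftmost) column minus $1$. *)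

theory Defs
  imports "HOL-Analysis.Analysis"
begin

type_synonym cell = "int \<times> int"   (* (x,y) = centre of the unit cell *)

definition edge_adj :: "cell \<Rightarrow> cell \<Rightarrow> bool" where
  "edge_adj p q \<longleftrightarrow> \<bar>fst p - fst q\<bar> + \<bar>snd p - snd q\<bar> = 1"

definition polyomino :: "cell set \<Rightarrow> bool" where
  "polyomino P \<longleftrightarrow> finite P \<and> P \<noteq> {} \<and>
     (\<forall>p\<in>P. \<forall>q\<in>P. (\<lambda>a b. a \<in> P \<and> b \<in> P \<and> edge_adj a b)\<^sup>*\<^sup>* p q)"

definition convex_poly :: "cell set \<Rightarrow> bool" where
  "convex_poly P \<longleftrightarrow> polyomino P \<and>
     (\<forall>a y1 y2 y. (a, y1) \<in> P \<and> (a, y2) \<in> P \<and> y1 \<le> y \<and> y \<le> y2 \<longrightarrow> (a, y) \<in> P) \<and>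
     (\<forall>b x1 x2 x. (x1, b) \<in> P \<and> (x2, b) \<in> P \<and> x1 \<le> x \<and> x \<le> x2 \<longrightarrow> (x, b) \<in> P)"

(* canonical representative of a translation class: leftmost column at x = 0, bottom row at y = 0 *)
definition normalized :: "cell set \<Rightarrow> bool" where
  "normalized P \<longleftrightarrow> (\<forall>(a,b)\<in>P. 0 \<le> a \<and> 0 \<le> b) \<and> (\<exists>b. (0, b) \<in> P) \<and> (\<exists>a. (a, 0) \<in> P)"

definition columns :: "cell set \<Rightarrow> int set" where
  "columns P = fst ` P"

definition rows :: "cell set \<Rightarrow> int set" where
  "rows P = snd ` P"

definition col_top :: "cell set \<Rightarrow> int \<Rightarrow> int" where
  "col_top P a = Max {y. (a, y) \<in> P}"

definition CPu :: "cell set set" where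
  "CPu = {P. convex_poly P \<and> normalized P \<and>
           (\<forall>j\<in>columns P. \<forall>s\<in>columns P. j < s \<longrightarrow> col_top P s \<le> col_top P j)}"

definition v_stat :: "cell set \<Rightarrow> nat" where "v_stat P = card (columns P)"
definition h_stat :: "cell set \<Rightarrow> nat" where "h_stat P = card (rows P)"
definition a_stat :: "cell set \<Rightarrow> nat" where "a_stat P = card P"
definition c_stat :: "cell set \<Rightarrow> nat" where
  "c_stat P = card {y. (Min (columns P), y) \<in> P} - 1"

definition z0 :: "real \<Rightarrow> real \<Rightarrow> real" where
  "z0 x y = (1 + y - x - sqrt ((1 + y - x)^2 - 4*y)) / (2*y)"

end

theory Submission
  imports Defs
begin

(*
  A polyomino of CP^u is stored as the list of its columns, read from left to right, each column
  given by the rows (bottom, top) of its lowest and highest cell, and translated so that its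
  lowest cell lies in row 0.  Deleting the first column of a list with at least two columns
  leaves either a list that still has a cell in row 0 (add_col: the deleted column ends u >= 0
  rows above the top of the new first column and starts i rows below it, with i at most the
  c-statistic of the new list), or a list whose first column rests on row 0 after being moved
  down by some d >= 1 (add_col_lift).

  Summing the geometric series over these free parameters gives, with A = 1 - yz and F(z) the
  series of the lists whose first column rests on row 0,
    F = xy/A + xF/A + xyzF/A^2,
    C(z) ((1 - z) A + xz) = xy(1 - z) + x C(1) + x^2 y^2 z (1 - z) / (A^2 - x).
  The kernel (1 - z)(1 - yz) + xz vanishes at z = z0 (kernel method), which eliminates the
  unknown C(1).  All series converge absolutely for |x|, |y| <= 1/100 and |z| <= 2, a region
  containing z0, since there the lists with n + 1 columns have total weight at most 2^-n.
*)

section \<open>Infinite sums\<close>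

lemma has_sum_geometric:
  fixes w :: real
  assumes "\<bar>w\<bar> < 1"
  shows "((\<lambda>n. w ^ n) has_sum 1 / (1 - w)) UNIV"
proof -
  have "(\<lambda>n. w ^ n) sums (1 / (1 - w))" using geometric_sums[of w] assms by auto
  moreover have "summable (\<lambda>n. norm (w ^ n))" using assms
    by (auto simp: power_abs intro!: summable_geometric)
  ultimately show ?thesis by (intro norm_summable_imp_has_sum)
qed

lemma has_sum_times_real:
  fixes f :: "'a \<Rightarrow> real" and g :: "'b \<Rightarrow> real"
  assumes f: "(f has_sum a) A" and g: "(g has_sum b) B"
  shows "((\<lambda>(i, j). f i * g j) has_sum a * b) (A \<times> B)"
proof -
  have sf: "(\<lambda>i. norm (f i)) summable_on A" and sg: "(\<lambda>j. norm (g j)) summable_on B"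
    using f g has_sum_imp_summable summable_on_iff_abs_summable_on_real by blast+
  have "(\<lambda>p. norm ((\<lambda>(i, j). f i * g j) p)) summable_on (A \<times> B)"
  proof (rule iffD2[OF Infinite_Sum.abs_summable_on_Sigma_iff], intro conjI ballI)
    fix i assume "i \<in> A"
    show "(\<lambda>j. norm (case (i, j) of (i, j) \<Rightarrow> f i * g j)) summable_on B"
      using summable_on_cmult_right[OF sg, of "norm (f i)"] by (simp add: abs_mult)
  next
    have "(\<Sum>\<^sub>\<infinity>j\<in>B. norm (case (i, j) of (i, j) \<Rightarrow> f i * g j)) = norm (f i) * infsum (\<lambda>j. norm (g j)) B"
      for i by (simp add: abs_mult infsum_cmult_right')
    then show "(\<lambda>i. norm (\<Sum>\<^sub>\<infinity>j\<in>B. norm (case (i, j) of (i, j) \<Rightarrow> f i * g j))) summable_on A"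
      using summable_on_cmult_left[OF sf] by (simp add: infsum_nonneg)
  qed
  then have "(\<lambda>(i, j). f i * g j) summable_on (A \<times> B)"
    using abs_summable_summable by blast
  then show ?thesis
    by (intro has_sum_SigmaI[where g = "\<lambda>i. f i * b"])
       (use has_sum_cmult_right[OF g] has_sum_cmult_left[OF f] in auto)
qed

lemma has_sum_image_SigmaD:
  fixes f :: "'c \<Rightarrow> 'd :: {topological_comm_monoid_add, t3_space}"
  assumes "(f has_sum S) (h ` Sigma A B)" "inj_on h (Sigma A B)"
    and "\<And>a. a \<in> A \<Longrightarrow> ((\<lambda>b. f (h (a, b))) has_sum g a) (B a)"
  shows "(g has_sum S) A"
proof -
  have "((f \<circ> h) has_sum S) (Sigma A B)" using assms(1) has_sum_reindex[OF assms(2)] by blast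
  then show ?thesis by (rule has_sum_SigmaD) (use assms(3) in auto)
qed

lemma has_sum_image_Sigma:
  fixes f :: "'c \<Rightarrow> 'd :: {topological_comm_monoid_add, t3_space}"
  assumes "f summable_on h ` Sigma A B" "inj_on h (Sigma A B)"
    and "\<And>a. a \<in> A \<Longrightarrow> ((\<lambda>b. f (h (a, b))) has_sum g a) (B a)" "(g has_sum S) A"
  shows "(f has_sum S) (h ` Sigma A B)"
proof -
  have "(f has_sum infsum f (h ` Sigma A B)) (h ` Sigma A B)" using assms(1) by (rule has_sum_infsum)
  moreover from has_sum_image_SigmaD[OF this assms(2,3)]
  have "infsum f (h ` Sigma A B) = S" using assms(4) has_sum_unique by blast
  ultimately show ?thesis by simp
qed

lemma has_sum_image_SigmaI_nonneg:
  fixes f :: "'c \<Rightarrow> real"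
  assumes "inj_on h (Sigma A B)" "\<And>a. a \<in> A \<Longrightarrow> ((\<lambda>b. f (h (a, b))) has_sum g a) (B a)"
    and "(g has_sum S) A" "\<And>p. p \<in> Sigma A B \<Longrightarrow> 0 \<le> f (h p)"
  shows "(f has_sum S) (h ` Sigma A B)"
proof (rule has_sum_image_Sigma[OF _ assms(1-3)])
  have "(f \<circ> h) summable_on Sigma A B"
    by (rule summable_on_SigmaI[where g = g]) (use assms has_sum_imp_summable in auto)
  then show "f summable_on h ` Sigma A B" using summable_on_reindex[OF assms(1)] by blast
qed

section \<open>Column lists\<close>

type_synonym column = "int \<times> int"

(* Columns (bottom, top) from left to right: nonempty, tops weakly decreasing, adjacent columns
   sharing a row, and the lower boundary unimodal (a bottom that rises is a minimum of all later
   bottoms). *)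
fun cpu_list :: "column list \<Rightarrow> bool" where
  "cpu_list [] = False"
| "cpu_list [p] \<longleftrightarrow> fst p \<le> snd p"
| "cpu_list (p # q # r) \<longleftrightarrow> fst p \<le> snd p \<and> snd q \<le> snd p \<and> fst p \<le> snd q \<and> cpu_list (q # r) \<and>
      (fst q \<le> fst p \<or> (\<forall>s\<in>set (q # r). fst q \<le> fst s))"

definition cpu_lists :: "column list set" where
  "cpu_lists = {cs. cpu_list cs \<and> (\<forall>p\<in>set cs. 0 \<le> fst p) \<and> (\<exists>p\<in>set cs. fst p = 0)}"

definition grounded_lists :: "column list set" where
  "grounded_lists = {cs \<in> cpu_lists. fst (hd cs) = 0}"

(* The first column is a highest one and the lowest row is 0, so this counts the rows. *)
definition h_list :: "column list \<Rightarrow> nat" where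
  "h_list cs = Suc (nat (snd (hd cs)))"

definition c_list :: "column list \<Rightarrow> nat" where
  "c_list cs = nat (snd (hd cs) - fst (hd cs))"

definition shift_cols :: "int \<Rightarrow> column list \<Rightarrow> column list" where
  "shift_cols d = map (\<lambda>(b, t). (b + d, t + d))"

lemma cpu_list_shift_cols [simp]: "cpu_list (shift_cols d cs) = cpu_list cs"
  by (induction cs rule: cpu_list.induct) (auto simp: shift_cols_def)

lemma shift_cols_shift_cols [simp]: "shift_cols a (shift_cols b cs) = shift_cols (a + b) cs"
  by (induction cs) (auto simp: shift_cols_def)

lemma shift_cols_0 [simp]: "shift_cols 0 cs = cs"
  by (induction cs) (auto simp: shift_cols_def)

lemma cpu_list_bounds: "cpu_list cs \<Longrightarrow> p \<in> set cs \<Longrightarrow> fst p \<le> snd p \<and> snd p \<le> snd (hd cs)"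
  by (induction cs rule: cpu_list.induct) auto

lemma cpu_lists_nonempty: "cs \<in> cpu_lists \<Longrightarrow> cs \<noteq> []"
  by (auto simp: cpu_lists_def)

lemma cpu_lists_hd: "cs \<in> cpu_lists \<Longrightarrow> 0 \<le> fst (hd cs) \<and> fst (hd cs) \<le> snd (hd cs)"
  using cpu_list_bounds[of cs "hd cs"] by (cases cs) (auto simp: cpu_lists_def)

lemma grounded_lists_subset: "grounded_lists \<subseteq> cpu_lists"
  by (auto simp: grounded_lists_def)

section \<open>Column lists as polyominoes\<close>

definition cells :: "column list \<Rightarrow> cell set" where
  "cells cs = (\<Union>j<length cs. {int j} \<times> {fst (cs ! j)..snd (cs ! j)})"

lemma mem_cells:
  "(a, y) \<in> cells cs \<longleftrightarrow> 0 \<le> a \<and> a < int (length cs) \<and> fst (cs ! nat a) \<le> y \<and> y \<le> snd (cs ! nat a)"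
proof
  assume "(a, y) \<in> cells cs"
  then obtain j where "j < length cs" "a = int j" "fst (cs ! j) \<le> y" "y \<le> snd (cs ! j)"
    unfolding cells_def by auto
  then show "0 \<le> a \<and> a < int (length cs) \<and> fst (cs ! nat a) \<le> y \<and> y \<le> snd (cs ! nat a)" by simp
next
  assume a: "0 \<le> a \<and> a < int (length cs) \<and> fst (cs ! nat a) \<le> y \<and> y \<le> snd (cs ! nat a)"
  then have "nat a < length cs" "a = int (nat a)" by auto
  then show "(a, y) \<in> cells cs" using a unfolding cells_def by (intro UN_I[of "nat a"]) auto
qed

lemma cells_Cons: "cells (p # r) = {0} \<times> {fst p..snd p} \<union> (\<lambda>(a, y). (a + 1, y)) ` cells r"
proof (intro set_eqI iffI)
  fix c assume c: "c \<in> cells (p # r)"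
  obtain a y where [simp]: "c = (a, y)" by (cases c)
  show "c \<in> {0} \<times> {fst p..snd p} \<union> (\<lambda>(a, y). (a + 1, y)) ` cells r"
  proof (cases "a = 0")
    case False
    then have "(a - 1, y) \<in> cells r" using c by (auto simp: mem_cells nth_Cons' nat_diff_distrib)
    then show ?thesis by (auto simp: image_iff intro!: bexI[of _ "(a - 1, y)"])
  qed (use c in \<open>auto simp: mem_cells\<close>)
qed (auto simp: mem_cells nat_add_distrib)

lemma cpu_list_nth_col: "cpu_list cs \<Longrightarrow> j < length cs \<Longrightarrow> fst (cs ! j) \<le> snd (cs ! j)"
  using cpu_list_bounds[of cs] nth_mem[of j cs] by auto

lemma cpu_list_nth_top_antimono:
  "cpu_list cs \<Longrightarrow> j \<le> k \<Longrightarrow> k < length cs \<Longrightarrow> snd (cs ! k) \<le> snd (cs ! j)"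
proof (induction cs arbitrary: j k rule: cpu_list.induct)
  case (3 p q r)
  show ?case
  proof (cases j)
    case 0
    then show ?thesis using cpu_list_bounds[OF "3.prems"(1) nth_mem[OF "3.prems"(3)]] by simp
  next
    case (Suc j')
    then obtain k' where "k = Suc k'" using "3.prems"(2) by (cases k) auto
    then show ?thesis using "3.IH"[of j' k'] "3.prems" Suc by simp
  qed
qed auto

lemma cpu_list_nth_bottom_between:
  assumes "cpu_list cs" "j < k" "k < l" "l < length cs"
    and "fst (cs ! j) \<le> y" "fst (cs ! l) \<le> y" "y \<le> snd (cs ! l)"
  shows "fst (cs ! k) \<le> y"
  using assms
proof (induction cs arbitrary: j k l rule: cpu_list.induct)
  case (3 p q r)
  obtain k' l' where kl: "k = Suc k'" "l = Suc l'" using "3.prems"(2,3) by (cases k; cases l) auto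
  have l': "l' < length (q # r)" "fst ((q # r) ! l') \<le> y" "y \<le> snd ((q # r) ! l')" "k' < l'"
    using "3.prems"(3,4,6,7) kl by auto
  show ?case
  proof (cases j)
    case 0
    have "fst q \<le> y"
    proof (cases "fst q \<le> fst p")
      case False
      then have "fst q \<le> fst ((q # r) ! l')" using "3.prems"(1) nth_mem[OF l'(1)] by auto
      then show ?thesis using l'(2) by simp
    qed (use "3.prems"(5) 0 in simp)
    then show ?thesis using "3.IH"[of 0 k' l'] "3.prems"(1) l' kl by (cases k') auto
  next
    case (Suc j')
    then show ?thesis using "3.IH"[of j' k' l'] "3.prems" l' kl by simp
  qed
qed auto

lemma fst_image_cells: "cpu_list cs \<Longrightarrow> fst ` cells cs = {0..<int (length cs)}"
proof (intro set_eqI iffI)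
  fix a assume "cpu_list cs" "a \<in> {0..<int (length cs)}"
  then have "(a, fst (cs ! nat a)) \<in> cells cs" using cpu_list_nth_col[of cs "nat a"] by (auto simp: mem_cells)
  then show "a \<in> fst ` cells cs" by force
qed (auto simp: mem_cells)

lemma column_cells: "j < length cs \<Longrightarrow> {y. (int j, y) \<in> cells cs} = {fst (cs ! j)..snd (cs ! j)}"
  by (auto simp: mem_cells)

lemma snd_image_cells: "cpu_list cs \<Longrightarrow> snd ` cells cs = {Min (fst ` set cs)..snd (hd cs)}"
proof (induction cs rule: cpu_list.induct)
  case (2 p)
  have "cells [p] = {0} \<times> {fst p..snd p}" using cells_Cons[of p "[]"] by (simp add: cells_def)
  then show ?case by auto
next
  case (3 p q r)
  define M where "M = Min (fst ` set (q # r))"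
  have "snd ` (\<lambda>(a, y). (a + 1, y)) ` cells (q # r) = snd ` cells (q # r)" by force
  then have "snd ` cells (p # q # r) = {fst p..snd p} \<union> {M..snd q}"
    using 3 unfolding cells_Cons[of p "q # r"] image_Un M_def by auto
  moreover have "Min (fst ` set (p # q # r)) = min (fst p) M" by (simp add: M_def Min_insert)
  moreover have "M \<le> fst q" "fst q \<le> snd q" "fst p \<le> snd q" "snd q \<le> snd p"
    using "3.prems" cpu_list_nth_col[of "q # r" 0] by (auto simp: M_def)
  ultimately show ?case by auto
qed auto

definition adj_in :: "cell set \<Rightarrow> cell \<Rightarrow> cell \<Rightarrow> bool" where
  "adj_in P a b \<longleftrightarrow> a \<in> P \<and> b \<in> P \<and> edge_adj a b"

definition cell_connected :: "cell set \<Rightarrow> bool" where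
  "cell_connected P \<longleftrightarrow> (\<forall>p\<in>P. \<forall>q\<in>P. (adj_in P)\<^sup>*\<^sup>* p q)"

lemma polyomino_iff_connected: "polyomino P \<longleftrightarrow> finite P \<and> P \<noteq> {} \<and> cell_connected P"
proof -
  have "(\<lambda>a b. a \<in> P \<and> b \<in> P \<and> edge_adj a b) = adj_in P" by (auto simp: adj_in_def fun_eq_iff)
  then show ?thesis by (simp add: polyomino_def cell_connected_def)
qed

lemma adj_in_rtranclp_sym: "(adj_in P)\<^sup>*\<^sup>* a b \<Longrightarrow> (adj_in P)\<^sup>*\<^sup>* b a"
proof -
  have "conversep (adj_in P) = adj_in P"
    by (auto simp: adj_in_def fun_eq_iff edge_adj_def abs_minus_commute)
  then show "(adj_in P)\<^sup>*\<^sup>* a b \<Longrightarrow> (adj_in P)\<^sup>*\<^sup>* b a" by (metis rtranclp_converseI)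
qed

lemma adj_in_rtranclp_mono: "P \<subseteq> Q \<Longrightarrow> (adj_in P)\<^sup>*\<^sup>* a b \<Longrightarrow> (adj_in Q)\<^sup>*\<^sup>* a b"
  by (rule rtranclp_mono[THEN predicate2D, rotated]) (auto simp: adj_in_def)

lemma cell_connected_Un:
  assumes "cell_connected A" "cell_connected B" "a \<in> A" "b \<in> B" "edge_adj a b"
  shows "cell_connected (A \<union> B)"
proof -
  have A: "(adj_in (A \<union> B))\<^sup>*\<^sup>* p q" if "p \<in> A" "q \<in> A" for p q
    using assms(1) that adj_in_rtranclp_mono[of A "A \<union> B"] by (auto simp: cell_connected_def)
  have B: "(adj_in (A \<union> B))\<^sup>*\<^sup>* p q" if "p \<in> B" "q \<in> B" for p q
    using assms(2) that adj_in_rtranclp_mono[of B "A \<union> B"] by (auto simp: cell_connected_def)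
  have "(adj_in (A \<union> B))\<^sup>*\<^sup>* a b" using assms(3-5) by (auto simp: adj_in_def)
  then have AB: "(adj_in (A \<union> B))\<^sup>*\<^sup>* p q" if "p \<in> A" "q \<in> B" for p q
    using A[OF that(1) assms(3)] B[OF assms(4) that(2)] by (meson rtranclp_trans)
  show ?thesis unfolding cell_connected_def using A B AB adj_in_rtranclp_sym by blast
qed

lemma cell_connected_image:
  assumes "cell_connected S" "\<And>a b. edge_adj (f a) (f b) = edge_adj a b"
  shows "cell_connected (f ` S)"
proof -
  have "(adj_in (f ` S))\<^sup>*\<^sup>* (f p) (f q)" if "(adj_in S)\<^sup>*\<^sup>* p q" for p q
    using that
  proof (induction rule: rtranclp_induct)
    case (step y z)
    then have "adj_in (f ` S) (f y) (f z)" using assms(2) by (auto simp: adj_in_def)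
    with step.IH show ?case by (meson rtranclp.rtrancl_into_rtrancl)
  qed simp
  then show ?thesis using assms(1) by (auto simp: cell_connected_def)
qed

lemma cell_connected_column: "cell_connected ({0} \<times> {b..t})"
proof -
  define C where "C = {0::int} \<times> {b..t}"
  have up: "(adj_in C)\<^sup>*\<^sup>* (0, y) (0, y + int n)" if "b \<le> y" "y + int n \<le> t" for y n
    using that
  proof (induction n)
    case (Suc n)
    then have "(adj_in C)\<^sup>*\<^sup>* (0, y) (0, y + int n)" by simp
    moreover have "adj_in C (0, y + int n) (0, y + int (Suc n))"
      using Suc.prems by (auto simp: adj_in_def C_def edge_adj_def)
    ultimately show ?case by (meson rtranclp.rtrancl_into_rtrancl)
  qed simp
  have "(adj_in C)\<^sup>*\<^sup>* (0, y1) (0, y2)" if "(0, y1) \<in> C" "(0, y2) \<in> C" "y1 \<le> y2" for y1 y2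
    using up[of y1 "nat (y2 - y1)"] that by (auto simp: C_def)
  then have "(adj_in C)\<^sup>*\<^sup>* p q" if "p \<in> C" "q \<in> C" for p q
    using that adj_in_rtranclp_sym by (cases p, cases q) (auto simp: C_def, metis linear)
  then show ?thesis by (auto simp: cell_connected_def C_def)
qed

lemma cell_connected_cells: "cpu_list cs \<Longrightarrow> cell_connected (cells cs)"
proof (induction cs rule: cpu_list.induct)
  case (2 p)
  have "cells [p] = {0} \<times> {fst p..snd p}" using cells_Cons[of p "[]"] by (simp add: cells_def)
  then show ?case using cell_connected_column by simp
next
  case (3 p q r)
  have shifted: "cell_connected ((\<lambda>(a, y). (a + 1, y)) ` cells (q # r))"
    by (rule cell_connected_image) (use 3 in \<open>auto simp: edge_adj_def split: prod.splits\<close>)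
  define y where "y = max (fst p) (fst q)"
  have "fst p \<le> snd q" "fst q \<le> snd q" "snd q \<le> snd p" "fst p \<le> snd p"
    using "3.prems" cpu_list_nth_col[of "q # r" 0] by auto
  then have "(0, y) \<in> {0} \<times> {fst p..snd p}" "(0, y) \<in> cells (q # r)"
    by (auto simp: mem_cells y_def)
  moreover from this have "(1, y) \<in> (\<lambda>(a, y). (a + 1, y)) ` cells (q # r)" by force
  ultimately show ?case unfolding cells_Cons[of p "q # r"]
    by (intro cell_connected_Un[OF cell_connected_column shifted]) (auto simp: edge_adj_def)
qed auto

lemma cell_connected_crossing:
  assumes "cell_connected P" "p \<in> P" "q \<in> P" "fst p \<le> a" "a < fst q"
  shows "\<exists>y. (a, y) \<in> P \<and> (a + 1, y) \<in> P"
proof (rule ccontr)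
  assume no_crossing: "\<nexists>y. (a, y) \<in> P \<and> (a + 1, y) \<in> P"
  have "fst u \<le> a" if "(adj_in P)\<^sup>*\<^sup>* p u" for u
    using that
  proof (induction rule: rtranclp_induct)
    case (step u v)
    obtain u1 u2 v1 v2 where uv: "u = (u1, u2)" "v = (v1, v2)" by (cases u, cases v)
    have "u \<in> P" "v \<in> P" "\<bar>u1 - v1\<bar> + \<bar>u2 - v2\<bar> = 1"
      using step.hyps(2) uv by (auto simp: adj_in_def edge_adj_def)
    show ?case
    proof (rule ccontr)
      assume "\<not> fst v \<le> a"
      then have "v1 = a + 1" "u1 = a" "u2 = v2" using \<open>\<bar>u1 - v1\<bar> + \<bar>u2 - v2\<bar> = 1\<close> step.IH uv by auto
      then show False using no_crossing \<open>u \<in> P\<close> \<open>v \<in> P\<close> uv by auto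
    qed
  qed (use assms(4) in simp)
  moreover have "(adj_in P)\<^sup>*\<^sup>* p q" using assms(1-3) by (auto simp: cell_connected_def)
  ultimately show False using assms(5) by fastforce
qed

lemma cell_connected_column_nonempty:
  assumes "cell_connected P" "p \<in> P" "q \<in> P" "fst p \<le> a" "a \<le> fst q"
  shows "\<exists>y. (a, y) \<in> P"
proof (cases "a = fst q")
  case True
  then show ?thesis using assms(3) by (cases q) auto
next
  case False
  then show ?thesis using cell_connected_crossing[OF assms(1-4)] assms(5) by fastforce
qed

lemma col_top_cells: "cpu_list cs \<Longrightarrow> k < length cs \<Longrightarrow> col_top (cells cs) (int k) = snd (cs ! k)"
  unfolding col_top_def column_cells by (rule Max_eqI) (auto dest: cpu_list_nth_col)

lemma row_convex_cells:
  assumes "cpu_list cs" "(x1, y) \<in> cells cs" "(x2, y) \<in> cells cs" "x1 \<le> x" "x \<le> x2"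
  shows "(x, y) \<in> cells cs"
proof (cases "x = x1 \<or> x = x2")
  case False
  then have lt: "x1 < x" "x < x2" using assms(4,5) by auto
  have r: "0 \<le> x1" "x2 < int (length cs)" "fst (cs ! nat x1) \<le> y" "fst (cs ! nat x2) \<le> y"
    "y \<le> snd (cs ! nat x2)"
    using assms(2,3) by (auto simp: mem_cells)
  have "fst (cs ! nat x) \<le> y"
    using cpu_list_nth_bottom_between[OF assms(1), of "nat x1" "nat x" "nat x2" y] r lt by auto
  moreover have "snd (cs ! nat x2) \<le> snd (cs ! nat x)"
    using cpu_list_nth_top_antimono[OF assms(1), of "nat x" "nat x2"] r lt by auto
  ultimately show ?thesis using r lt by (auto simp: mem_cells)
qed (use assms in auto)

lemma cells_in_CPu:
  assumes cs: "cs \<in> cpu_lists"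
  shows "cells cs \<in> CPu"
proof -
  have cpu: "cpu_list cs" and nonneg: "\<forall>p\<in>set cs. 0 \<le> fst p" and floor: "\<exists>p\<in>set cs. fst p = 0"
    using cs by (auto simp: cpu_lists_def)
  have len: "0 < length cs" using cs cpu_lists_nonempty by auto
  have first: "(0, fst (cs ! 0)) \<in> cells cs" using cpu_list_nth_col[OF cpu len] len by (simp add: mem_cells)
  then have "polyomino (cells cs)"
    unfolding polyomino_iff_connected using cell_connected_cells[OF cpu] by (auto simp: cells_def)
  moreover have "\<forall>a y1 y2 y. (a, y1) \<in> cells cs \<and> (a, y2) \<in> cells cs \<and> y1 \<le> y \<and> y \<le> y2
      \<longrightarrow> (a, y) \<in> cells cs"
    by (auto simp: mem_cells)
  moreover have "\<forall>b x1 x2 x. (x1, b) \<in> cells cs \<and> (x2, b) \<in> cells cs \<and> x1 \<le> x \<and> x \<le> x2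
      \<longrightarrow> (x, b) \<in> cells cs"
    using row_convex_cells[OF cpu] by blast
  ultimately have "convex_poly (cells cs)" unfolding convex_poly_def by blast
  moreover have "normalized (cells cs)"
  proof -
    have "0 \<le> a \<and> 0 \<le> b" if "(a, b) \<in> cells cs" for a b
    proof -
      have "0 \<le> a" "nat a < length cs" "fst (cs ! nat a) \<le> b" using that by (auto simp: mem_cells)
      moreover from this have "0 \<le> fst (cs ! nat a)" using nonneg nth_mem by blast
      ultimately show ?thesis by simp
    qed
    moreover obtain k where "k < length cs" "fst (cs ! k) = 0" using floor by (metis in_set_conv_nth)
    then have "(int k, 0) \<in> cells cs" using cpu_list_nth_col[OF cpu, of k] by (simp add: mem_cells)
    ultimately show ?thesis unfolding normalized_def using first by blast
  qed
  moreover have "\<forall>j\<in>columns (cells cs). \<forall>s\<in>columns (cells cs).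
      j < s \<longrightarrow> col_top (cells cs) s \<le> col_top (cells cs) j"
  proof (intro ballI impI)
    fix j s assume "j \<in> columns (cells cs)" "s \<in> columns (cells cs)" "j < s"
    then have "0 \<le> j" "s < int (length cs)" "j < s"
      unfolding columns_def fst_image_cells[OF cpu] by auto
    then show "col_top (cells cs) s \<le> col_top (cells cs) j"
      using col_top_cells[OF cpu, of "nat s"] col_top_cells[OF cpu, of "nat j"]
        cpu_list_nth_top_antimono[OF cpu, of "nat j" "nat s"] by auto
  qed
  ultimately show ?thesis unfolding CPu_def by blast
qed

lemma stats_cells:
  assumes cs: "cs \<in> cpu_lists"
  shows "v_stat (cells cs) = length cs" "h_stat (cells cs) = h_list cs" "c_stat (cells cs) = c_list cs"
proof -
  have cpu: "cpu_list cs" and nonneg: "\<forall>p\<in>set cs. 0 \<le> fst p" and floor: "\<exists>p\<in>set cs. fst p = 0"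
    using cs by (auto simp: cpu_lists_def)
  have len: "0 < length cs" using cs cpu_lists_nonempty by auto
  show "v_stat (cells cs) = length cs" by (simp add: v_stat_def columns_def fst_image_cells[OF cpu])
  have "Min (fst ` set cs) = 0" using nonneg floor by (intro Min_eqI) force+
  then show "h_stat (cells cs) = h_list cs"
    using cpu_lists_hd[OF cs]
    by (simp add: h_stat_def rows_def snd_image_cells[OF cpu] h_list_def nat_add_distrib)
  have "Min (columns (cells cs)) = 0"
    using len unfolding columns_def fst_image_cells[OF cpu] by (intro Min_eqI) auto
  moreover have "{y. (0, y) \<in> cells cs} = {fst (hd cs)..snd (hd cs)}"
    using column_cells[OF len] len by (simp add: hd_conv_nth)
  ultimately show "c_stat (cells cs) = c_list cs"
    using cpu_lists_hd[OF cs] by (simp add: c_stat_def c_list_def)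
qed

lemma inj_on_cells: "inj_on cells (Collect cpu_list)"
proof (rule inj_onI)
  fix cs cs' assume "cs \<in> Collect cpu_list" "cs' \<in> Collect cpu_list" and eq: "cells cs = cells cs'"
  then have cpu: "cpu_list cs" "cpu_list cs'" by auto
  have "card {0..<int (length cs)} = card {0..<int (length cs')}"
    using fst_image_cells[OF cpu(1)] fst_image_cells[OF cpu(2)] eq by simp
  then have len: "length cs = length cs'" by simp
  show "cs = cs'"
  proof (rule nth_equalityI[OF len])
    fix j assume j: "j < length cs"
    have "{fst (cs ! j)..snd (cs ! j)} = {fst (cs' ! j)..snd (cs' ! j)}"
      by (metis column_cells eq j len)
    then show "cs ! j = cs' ! j" using cpu_list_nth_col[OF cpu(1) j] by (simp add: prod_eq_iff)
  qed
qed

lemma cpu_list_mapI: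
  fixes f :: "nat \<Rightarrow> column"
  assumes "\<And>k. j \<le> k \<Longrightarrow> k < n \<Longrightarrow> fst (f k) \<le> snd (f k)"
    and "\<And>k. j \<le> k \<Longrightarrow> Suc k < n \<Longrightarrow> snd (f (Suc k)) \<le> snd (f k) \<and> fst (f k) \<le> snd (f (Suc k))"
    and "\<And>k l. j \<le> k \<Longrightarrow> fst (f k) < fst (f (Suc k)) \<Longrightarrow> Suc k \<le> l \<Longrightarrow> l < n
           \<Longrightarrow> fst (f (Suc k)) \<le> fst (f l)"
    and "j < n"
  shows "cpu_list (map f [j..<n])"
  using assms
proof (induction "n - j" arbitrary: j)
  case (Suc m)
  show ?case
  proof (cases "Suc j = n")
    case True
    then show ?thesis using Suc.prems(1)[of j] by (simp add: upt_rec)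
  next
    case False
    then have "Suc j < n" using Suc.prems(4) by simp
    have "cpu_list (map f [Suc j..<n])"
      using Suc.hyps(2) Suc.prems(1-3) \<open>Suc j < n\<close> by (intro Suc.hyps(1)) auto
    moreover have "[j..<n] = j # Suc j # [Suc (Suc j)..<n]"
      using \<open>Suc j < n\<close> by (simp add: upt_rec)
    moreover have "fst (f (Suc j)) \<le> fst (f j) \<or> (\<forall>l\<in>{Suc (Suc j)..<n}. fst (f (Suc j)) \<le> fst (f l))"
      using Suc.prems(3)[of j] by force
    ultimately show ?thesis
      using Suc.prems(1)[of j] Suc.prems(2)[of j] \<open>Suc j < n\<close> by (simp add: upt_rec[of "Suc j"])
  qed
qed simp

lemma convex_poly_column_profile:
  assumes "convex_poly P" "normalized P"
  obtains N bot top where "\<And>a y. (a, y) \<in> P \<longleftrightarrow> 0 \<le> a \<and> a \<le> N \<and> bot a \<le> y \<and> y \<le> top a"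
    and "\<And>a. 0 \<le> a \<Longrightarrow> a \<le> N \<Longrightarrow> bot a \<le> top a"
proof -
  have P: "finite P" "P \<noteq> {}" "cell_connected P"
    using assms(1) by (auto simp: convex_poly_def polyomino_iff_connected)
  have col_convex:
    "\<And>a y1 y2 y. (a, y1) \<in> P \<Longrightarrow> (a, y2) \<in> P \<Longrightarrow> y1 \<le> y \<Longrightarrow> y \<le> y2 \<Longrightarrow> (a, y) \<in> P"
    using assms(1) unfolding convex_poly_def by blast
  have nonneg: "\<And>a b. (a, b) \<in> P \<Longrightarrow> 0 \<le> a" using assms(2) unfolding normalized_def by blast
  obtain b0 where b0: "(0, b0) \<in> P" using assms(2) unfolding normalized_def by blast
  define N where "N = Max (fst ` P)"
  have N: "\<And>u. u \<in> P \<Longrightarrow> fst u \<le> N" unfolding N_def using P(1) by auto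
  have "N \<in> fst ` P" unfolding N_def using P(1,2) by (intro Max_in) auto
  then obtain q where q: "q \<in> P" "fst q = N" by auto
  define col where "col a = {y. (a, y) \<in> P}" for a
  have "col a \<subseteq> snd ` P" for a by (force simp: col_def)
  then have fin: "finite (col a)" for a using P(1) finite_subset by blast
  moreover have "col a \<noteq> {}" if "0 \<le> a" "a \<le> N" for a
    using cell_connected_column_nonempty[OF P(3) b0 q(1), of a] that q(2) by (auto simp: col_def)
  ultimately have col: "Min (col a) \<in> col a \<and> Max (col a) \<in> col a \<and> Min (col a) \<le> Max (col a)"
    if "0 \<le> a" "a \<le> N" for a
    using that by auto
  show ?thesis
  proof (rule that[of N "\<lambda>a. Min (col a)" "\<lambda>a. Max (col a)"])
    show "(a, y) \<in> P \<longleftrightarrow> 0 \<le> a \<and> a \<le> N \<and> Min (col a) \<le> y \<and> y \<le> Max (col a)" for a y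
    proof
      assume "(a, y) \<in> P"
      moreover from this have "y \<in> col a" by (simp add: col_def)
      ultimately show "0 \<le> a \<and> a \<le> N \<and> Min (col a) \<le> y \<and> y \<le> Max (col a)"
        using nonneg N[of "(a, y)"] fin by simp
    next
      assume "0 \<le> a \<and> a \<le> N \<and> Min (col a) \<le> y \<and> y \<le> Max (col a)"
      then show "(a, y) \<in> P" using col[of a] col_convex[of a "Min (col a)" "Max (col a)" y]
        by (auto simp: col_def)
    qed
  qed (use col in auto)
qed

context
  fixes P :: "cell set" and N :: int and bot top :: "int \<Rightarrow> int"
  assumes P: "P \<in> CPu"
    and mem: "\<And>a y. (a, y) \<in> P \<longleftrightarrow> 0 \<le> a \<and> a \<le> N \<and> bot a \<le> y \<and> y \<le> top a"
    and bot_le_top: "\<And>a. 0 \<le> a \<Longrightarrow> a \<le> N \<Longrightarrow> bot a \<le> top a"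
begin

lemma profile_N_nonneg: "0 \<le> N"
proof -
  obtain b where "(0, b) \<in> P" using P by (auto simp: CPu_def normalized_def)
  then show ?thesis using mem by simp
qed

lemma profile_top_antimono:
  assumes "0 \<le> j" "j < s" "s \<le> N"
  shows "top s \<le> top j"
proof -
  have col_top: "col_top P a = top a" if "0 \<le> a" "a \<le> N" for a
    unfolding col_top_def mem using that bot_le_top[OF that] by (intro Max_eqI) auto
  have "(j, bot j) \<in> P" "(s, bot s) \<in> P" using mem bot_le_top assms by auto
  then have "j \<in> columns P" "s \<in> columns P" unfolding columns_def by (auto intro: rev_image_eqI)
  then have "col_top P s \<le> col_top P j" using P assms(2) unfolding CPu_def by blast
  then show ?thesis using col_top assms by simp
qed

lemma profile_overlap:
  assumes "0 \<le> k" "k < N"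
  shows "bot k \<le> top (k + 1)"
proof -
  have "cell_connected P" using P by (auto simp: CPu_def convex_poly_def polyomino_iff_connected)
  moreover have "(0, bot 0) \<in> P" "(N, bot N) \<in> P" using mem bot_le_top assms by auto
  ultimately obtain y where "(k, y) \<in> P" "(k + 1, y) \<in> P"
    using cell_connected_crossing[of P "(0, bot 0)" "(N, bot N)" k] assms by auto
  then show ?thesis using mem[of k y] mem[of "k + 1" y] by simp
qed

lemma profile_bottom_unimodal:
  assumes "0 \<le> k" "bot k < bot (k + 1)" "k + 1 \<le> l" "l \<le> N"
  shows "bot (k + 1) \<le> bot l"
  using assms(3,4)
proof (induction l rule: int_ge_induct)
  case (step l)
  have row_convex:
    "\<And>x1 x2 x b. (x1, b) \<in> P \<Longrightarrow> (x2, b) \<in> P \<Longrightarrow> x1 \<le> x \<Longrightarrow> x \<le> x2 \<Longrightarrow> (x, b) \<in> P"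
    using P unfolding CPu_def convex_poly_def by blast
  show ?case
  proof (rule ccontr)
    assume "\<not> bot (k + 1) \<le> bot (l + 1)"
    (* Then row y meets the columns k and l + 1 but not k + 1. *)
    define y where "y = max (bot k) (bot (l + 1))"
    have "y < bot (k + 1)" using \<open>\<not> bot (k + 1) \<le> bot (l + 1)\<close> assms(2) by (simp add: y_def)
    have "bot (k + 1) \<le> bot l" using step.IH step.prems by simp
    moreover have "bot l \<le> top (l + 1)" using profile_overlap[of l] step.hyps step.prems assms(1) by simp
    moreover have "bot (l + 1) \<le> top (l + 1)" using bot_le_top[of "l + 1"] step.hyps step.prems assms(1) by simp
    ultimately have "y \<le> top (l + 1)" using assms(2) by (simp add: y_def)
    moreover have "top (l + 1) \<le> top k" using profile_top_antimono[of k "l + 1"] step.hyps step.prems assms(1) by simp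
    ultimately have "(l + 1, y) \<in> P" "(k, y) \<in> P"
      using mem[of "l + 1" y] mem[of k y] step.hyps step.prems assms(1) by (simp_all add: y_def)
    then have "(k + 1, y) \<in> P" using row_convex[of k y "l + 1" "k + 1"] step.hyps by simp
    then show False using mem[of "k + 1" y] \<open>y < bot (k + 1)\<close> by simp
  qed
qed simp

lemma profile_cpu_list: "cpu_list (map (\<lambda>k. (bot (int k), top (int k))) [0..<Suc (nat N)])"
proof (rule cpu_list_mapI)
  fix k assume "Suc k < Suc (nat N)"
  then show "snd (bot (int (Suc k)), top (int (Suc k))) \<le> snd (bot (int k), top (int k))
    \<and> fst (bot (int k), top (int k)) \<le> snd (bot (int (Suc k)), top (int (Suc k)))"
    using profile_top_antimono[of "int k" "int k + 1"] profile_overlap[of "int k"] by (simp add: add.commute)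
next
  fix k l assume "fst (bot (int k), top (int k)) < fst (bot (int (Suc k)), top (int (Suc k)))"
    "Suc k \<le> l" "l < Suc (nat N)"
  then show "fst (bot (int (Suc k)), top (int (Suc k))) \<le> fst (bot (int l), top (int l))"
    using profile_bottom_unimodal[of "int k" "int l"] by (simp add: add.commute)
next
  fix k assume "k < Suc (nat N)"
  then have "int k \<le> N" using profile_N_nonneg by linarith
  then show "fst (bot (int k), top (int k)) \<le> snd (bot (int k), top (int k))" using bot_le_top by simp
qed (use profile_N_nonneg in simp)

lemma profile_cells: "cells (map (\<lambda>k. (bot (int k), top (int k))) [0..<Suc (nat N)]) = P"
proof (intro set_eqI)
  fix c :: cell
  obtain a y where c: "c = (a, y)" by (cases c)
  have "0 \<le> a \<and> a < int (Suc (nat N)) \<longleftrightarrow> 0 \<le> a \<and> a \<le> N" using profile_N_nonneg by linarith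
  then show "c \<in> cells (map (\<lambda>k. (bot (int k), top (int k))) [0..<Suc (nat N)]) \<longleftrightarrow> c \<in> P"
    unfolding c mem_cells mem by (auto simp del: upt_Suc)
qed

lemma profile_in_cpu_lists: "map (\<lambda>k. (bot (int k), top (int k))) [0..<Suc (nat N)] \<in> cpu_lists"
proof -
  have "0 \<le> bot (int k)" if "k < Suc (nat N)" for k
  proof -
    have "(int k, bot (int k)) \<in> P" using that mem bot_le_top profile_N_nonneg by auto
    then show ?thesis using P by (auto simp: CPu_def normalized_def)
  qed
  moreover obtain a where "(a, 0) \<in> P" using P by (auto simp: CPu_def normalized_def)
  then have "nat a < Suc (nat N)" "bot (int (nat a)) = 0"
    using mem[of a 0] calculation[of "nat a"] by auto
  ultimately show ?thesis
    using profile_cpu_list by (auto simp: cpu_lists_def simp del: upt_Suc intro!: bexI[of _ "nat a"])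
qed

end

lemma CPu_subset_cells_image: "CPu \<subseteq> cells ` cpu_lists"
proof
  fix P assume P: "P \<in> CPu"
  then have "convex_poly P" "normalized P" by (auto simp: CPu_def)
  then show "P \<in> cells ` cpu_lists"
  proof (rule convex_poly_column_profile)
    fix N bot top
    assume mem: "\<And>a y. (a, y) \<in> P \<longleftrightarrow> 0 \<le> a \<and> a \<le> N \<and> bot a \<le> y \<and> y \<le> top a"
      and bot_le_top: "\<And>a. 0 \<le> a \<Longrightarrow> a \<le> N \<Longrightarrow> bot a \<le> top a"
    show ?thesis
      using profile_cells[of P N bot top, OF P mem bot_le_top]
        profile_in_cpu_lists[of P N bot top, OF P mem bot_le_top] by blast
  qed
qed

lemma bij_betw_cells: "bij_betw cells cpu_lists CPu"
proof -
  have "inj_on cells cpu_lists" by (rule inj_on_subset[OF inj_on_cells]) (auto simp: cpu_lists_def)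
  moreover have "cells ` cpu_lists = CPu" using cells_in_CPu CPu_subset_cells_image by blast
  ultimately show ?thesis by (simp add: bij_betw_def)
qed

section \<open>Deleting the first column\<close>

definition single_cols :: "column list set" where
  "single_cols = range (\<lambda>t::nat. [(0, int t)])"

fun add_col :: "column list \<times> nat \<times> nat \<Rightarrow> column list" where
  "add_col (cs, i, u) = (snd (hd cs) - int i, snd (hd cs) + int u) # cs"

fun add_col_lift :: "column list \<times> nat \<times> nat \<Rightarrow> column list" where
  "add_col_lift (cs, u, d) = (0, snd (hd cs) + int d + int u) # shift_cols (int d) cs"

definition add_col_params :: "column list set \<Rightarrow> (column list \<times> nat \<times> nat) set" where
  "add_col_params A = Sigma A (\<lambda>cs. {..c_list cs} \<times> UNIV)"

definition add_col_lift_params :: "column list set \<Rightarrow> (column list \<times> nat \<times> nat) set" where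
  "add_col_lift_params A = Sigma (A \<inter> grounded_lists) (\<lambda>_. UNIV \<times> {1..})"

lemma single_cols_eq: "single_cols = {cs \<in> cpu_lists. length cs = 1}"
proof (intro set_eqI iffI)
  fix cs assume "cs \<in> {cs \<in> cpu_lists. length cs = 1}"
  then obtain b t where cs: "cs = [(b, t)]" "b = 0" "0 \<le> t"
    by (auto simp: cpu_lists_def length_Suc_conv)
  then have "cs = [(0, int (nat t))]" by simp
  then show "cs \<in> single_cols" unfolding single_cols_def by (metis rangeI)
qed (auto simp: single_cols_def cpu_lists_def)

lemma single_cols_subset: "single_cols \<subseteq> grounded_lists"
  by (auto simp: single_cols_def grounded_lists_def cpu_lists_def)

lemma add_col_in_cpu_lists:
  assumes "cs \<in> cpu_lists" "i \<le> c_list cs"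
  shows "add_col (cs, i, u) \<in> cpu_lists"
proof -
  obtain q r where cs: "cs = q # r" using cpu_lists_nonempty[OF assms(1)] by (cases cs) auto
  then show ?thesis using assms cpu_lists_hd[OF assms(1)] by (auto simp: cpu_lists_def c_list_def)
qed

lemma add_col_lift_in_grounded_lists:
  assumes "cs \<in> grounded_lists" "1 \<le> d"
  shows "add_col_lift (cs, u, d) \<in> grounded_lists"
proof -
  obtain q r where cs: "cs = q # r"
    using cpu_lists_nonempty assms(1) grounded_lists_subset by (cases cs) auto
  have "0 \<le> snd q" using cpu_lists_hd[of cs] assms(1) cs by (auto simp: grounded_lists_def)
  moreover have "cpu_list (shift_cols (int d) cs)" using assms(1) by (simp add: grounded_lists_def cpu_lists_def)
  ultimately show ?thesis using assms cs
    by (auto simp: grounded_lists_def cpu_lists_def shift_cols_def split: prod.splits)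
qed

lemma add_col_in_grounded_lists_iff:
  assumes "cs \<in> cpu_lists" "i \<le> c_list cs"
  shows "add_col (cs, i, u) \<in> grounded_lists \<longleftrightarrow> cs \<in> grounded_lists \<and> i = c_list cs"
  using assms cpu_lists_hd[OF assms(1)] add_col_in_cpu_lists[OF assms, of u]
  by (auto simp: grounded_lists_def c_list_def)

lemma cpu_lists_cases:
  assumes "cs' \<in> cpu_lists" "2 \<le> length cs'"
  obtains (extend) t where "t \<in> add_col_params cpu_lists" "cs' = add_col t"
    | (lift) t where "t \<in> add_col_lift_params cpu_lists" "cs' = add_col_lift t"
proof -
  obtain p q r where cs': "cs' = p # q # r"
    using assms(2) by (metis One_nat_def Suc_1 Suc_le_length_iff)
  have nonneg: "\<forall>s\<in>set cs'. 0 \<le> fst s" and floor: "\<exists>s\<in>set cs'. fst s = 0"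
    using assms(1) by (auto simp: cpu_lists_def)
  have "cpu_list cs'" using assms(1) by (auto simp: cpu_lists_def)
  then have p: "fst p \<le> snd p" "snd q \<le> snd p" "fst p \<le> snd q" "cpu_list (q # r)"
    and unimodal: "fst q \<le> fst p \<or> (\<forall>s\<in>set (q # r). fst q \<le> fst s)"
    using cs' by auto
  show ?thesis
  proof (cases "\<exists>s\<in>set (q # r). fst s = 0")
    case True
    have "q # r \<in> cpu_lists" using True nonneg p cs' by (auto simp: cpu_lists_def)
    moreover have "fst q \<le> fst p" using unimodal True nonneg cs' by force
    ultimately have "(q # r, nat (snd q - fst p), nat (snd p - snd q)) \<in> add_col_params cpu_lists"
      by (auto simp: add_col_params_def c_list_def)
    moreover have "cs' = add_col (q # r, nat (snd q - fst p), nat (snd p - snd q))"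
      using p cs' by (cases p) auto
    ultimately show ?thesis by (rule extend)
  next
    case False
    have p0: "fst p = 0" and q0: "0 < fst q" using False nonneg floor cs' by force+
    then have above_q: "\<forall>s\<in>set (q # r). fst q \<le> fst s" using unimodal by auto
    define cs where "cs = shift_cols (- fst q) (q # r)"
    have "cpu_list cs" using p by (simp add: cs_def)
    then have "cs \<in> grounded_lists"
      using above_q by (auto simp: cs_def grounded_lists_def cpu_lists_def shift_cols_def split: prod.splits)
    then have t: "(cs, nat (snd p - snd q), nat (fst q)) \<in> add_col_lift_params cpu_lists"
      using q0 grounded_lists_subset by (auto simp: add_col_lift_params_def)
    have "shift_cols (int (nat (fst q))) cs = q # r" using q0 by (simp add: cs_def)
    moreover have "snd (hd cs) + int (nat (fst q)) + int (nat (snd p - snd q)) = snd p"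
      using q0 p by (simp add: cs_def shift_cols_def split: prod.splits)
    ultimately have "cs' = add_col_lift (cs, nat (snd p - snd q), nat (fst q))"
      using cs' p0 by (cases p) simp
    with t show ?thesis by (rule lift)
  qed
qed

lemma inj_add_col: "inj add_col"
  by (rule injI) auto

lemma inj_on_add_col_lift: "inj_on add_col_lift (add_col_lift_params A)"
proof (rule inj_onI)
  fix t t' assume t: "t \<in> add_col_lift_params A" and t': "t' \<in> add_col_lift_params A"
    and eq: "add_col_lift t = add_col_lift t'"
  obtain cs u d cs' u' d' where tt: "t = (cs, u, d)" "t' = (cs', u', d')" by (cases t, cases t')
  have "cs \<in> grounded_lists" "cs' \<in> grounded_lists" using t t' tt by (auto simp: add_col_lift_params_def)
  then obtain q r q' r' where qr: "cs = q # r" "cs' = q' # r'" "fst q = 0" "fst q' = 0"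
    using cpu_lists_nonempty grounded_lists_subset
    by (cases cs; cases cs') (auto simp: grounded_lists_def)
  have "d = d'" using eq tt qr by (auto simp: shift_cols_def split: prod.splits)
  moreover from this have "cs = cs'"
    using eq tt by (metis add_col_lift.simps list.inject shift_cols_shift_cols add.left_inverse shift_cols_0)
  ultimately show "t = t'" using eq tt by auto
qed

lemma add_col_disjoint_add_col_lift:
  assumes "A \<subseteq> cpu_lists"
  shows "add_col ` Sigma A I \<inter> add_col_lift ` add_col_lift_params B = {}"
proof -
  have "add_col (cs, i, u) \<noteq> add_col_lift (cs', u', d)"
    if cs: "cs \<in> cpu_lists" and cs': "cs' \<in> cpu_lists" and d: "1 \<le> d" for cs cs' i u u' d
  proof
    assume "add_col (cs, i, u) = add_col_lift (cs', u', d)"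
    then have "cs = shift_cols (int d) cs'" by simp
    moreover obtain s where "s \<in> set cs" "fst s = 0" using cs unfolding cpu_lists_def by blast
    moreover have "\<forall>s\<in>set (shift_cols (int d) cs'). int d \<le> fst s"
      using cs' by (auto simp: shift_cols_def cpu_lists_def)
    ultimately show False using d by force
  qed
  then show ?thesis using assms grounded_lists_subset
    by (fastforce simp: add_col_lift_params_def)
qed

lemma cpu_lists_length_Suc_Suc:
  "{cs \<in> cpu_lists. length cs = Suc (Suc n)}
     = add_col ` add_col_params {cs \<in> cpu_lists. length cs = Suc n}
       \<union> add_col_lift ` add_col_lift_params {cs \<in> cpu_lists. length cs = Suc n}"
proof (intro equalityI subsetI)
  fix cs' assume "cs' \<in> {cs \<in> cpu_lists. length cs = Suc (Suc n)}"
  then show "cs' \<in> add_col ` add_col_params {cs \<in> cpu_lists. length cs = Suc n}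
       \<union> add_col_lift ` add_col_lift_params {cs \<in> cpu_lists. length cs = Suc n}"
    by (elim CollectE conjE cpu_lists_cases)
       (force simp: add_col_params_def add_col_lift_params_def shift_cols_def)+
qed (use add_col_in_cpu_lists add_col_lift_in_grounded_lists grounded_lists_subset
     in \<open>auto simp: add_col_params_def add_col_lift_params_def shift_cols_def\<close>)

lemma cpu_lists_length_cases:
  assumes "cs \<in> cpu_lists"
  obtains "length cs = 1" | "2 \<le> length cs"
proof -
  have "length cs \<noteq> 0" using cpu_lists_nonempty[OF assms] by simp
  then show ?thesis using that by linarith
qed

lemma cpu_lists_decomp:
  "cpu_lists = single_cols \<union> add_col ` add_col_params cpu_lists
     \<union> add_col_lift ` add_col_lift_params cpu_lists"
proof (intro equalityI subsetI)
  fix cs assume cs: "cs \<in> cpu_lists"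
  then show "cs \<in> single_cols \<union> add_col ` add_col_params cpu_lists
     \<union> add_col_lift ` add_col_lift_params cpu_lists"
  proof (cases rule: cpu_lists_length_cases)
    case 1
    then show ?thesis using cs by (simp add: single_cols_eq)
  next
    case 2
    show ?thesis by (rule cpu_lists_cases[OF cs 2]) auto
  qed
qed (use single_cols_subset grounded_lists_subset add_col_in_cpu_lists add_col_lift_in_grounded_lists
     in \<open>auto simp: add_col_params_def add_col_lift_params_def\<close>)

lemma grounded_lists_decomp:
  "grounded_lists = single_cols \<union> add_col ` Sigma grounded_lists (\<lambda>cs. {c_list cs} \<times> UNIV)
     \<union> add_col_lift ` add_col_lift_params cpu_lists"
proof (intro equalityI subsetI)
  fix cs' assume cs': "cs' \<in> grounded_lists"
  then have "cs' \<in> cpu_lists" using grounded_lists_subset by auto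
  then show "cs' \<in> single_cols \<union> add_col ` Sigma grounded_lists (\<lambda>cs. {c_list cs} \<times> UNIV)
     \<union> add_col_lift ` add_col_lift_params cpu_lists"
  proof (cases rule: cpu_lists_length_cases)
    case 2
    show ?thesis
    proof (rule cpu_lists_cases[OF \<open>cs' \<in> cpu_lists\<close> 2])
      fix t assume t: "t \<in> add_col_params cpu_lists" "cs' = add_col t"
      then obtain cs i u where "t = (cs, i, u)" "cs \<in> cpu_lists" "i \<le> c_list cs"
        by (auto simp: add_col_params_def)
      with t cs' show ?thesis using add_col_in_grounded_lists_iff by fastforce
    qed auto
  qed (use \<open>cs' \<in> cpu_lists\<close> in \<open>simp add: single_cols_eq\<close>)
qed (use single_cols_subset grounded_lists_subset add_col_in_grounded_lists_iff add_col_lift_in_grounded_lists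
     in \<open>auto simp: add_col_lift_params_def\<close>)

lemma single_cols_disjoint_add_col:
  assumes "A \<subseteq> cpu_lists"
  shows "single_cols \<inter> (add_col ` Sigma A I \<union> add_col_lift ` add_col_lift_params B) = {}"
  using assms cpu_lists_nonempty grounded_lists_subset
  by (fastforce simp: single_cols_def add_col_lift_params_def shift_cols_def)

section \<open>Weights and convergence\<close>

definition list_weight :: "real \<Rightarrow> real \<Rightarrow> real \<Rightarrow> column list \<Rightarrow> real" where
  "list_weight x y z cs = x ^ length cs * y ^ h_list cs * z ^ c_list cs"

lemma list_weight_add_col:
  assumes "cs \<in> cpu_lists" "i \<le> c_list cs"
  shows "list_weight x y z (add_col (cs, i, u)) = x * list_weight x y 1 cs * z ^ i * (y * z) ^ u"
proof -
  have "0 \<le> fst (hd cs)" "fst (hd cs) \<le> snd (hd cs)" using cpu_lists_hd[OF assms(1)] by auto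
  then have "h_list (add_col (cs, i, u)) = h_list cs + u" "c_list (add_col (cs, i, u)) = i + u"
    using assms(2) by (auto simp: h_list_def c_list_def nat_add_distrib)
  then show ?thesis by (simp add: list_weight_def power_add power_mult_distrib)
qed

lemma list_weight_add_col_lift:
  assumes "cs \<in> grounded_lists"
  shows "list_weight x y z (add_col_lift (cs, u, d)) = x * list_weight x y z cs * (y * z) ^ u * (y * z) ^ d"
proof -
  have "fst (hd cs) = 0" "0 \<le> snd (hd cs)"
    using assms cpu_lists_hd[of cs] by (auto simp: grounded_lists_def)
  moreover have "cs \<noteq> []" using assms cpu_lists_nonempty grounded_lists_subset by auto
  ultimately have "h_list (add_col_lift (cs, u, d)) = h_list cs + d + u"
    "c_list (add_col_lift (cs, u, d)) = c_list cs + d + u" "c_list cs = nat (snd (hd cs))"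
    by (auto simp: h_list_def c_list_def shift_cols_def hd_map nat_add_distrib split: prod.splits)
  then show ?thesis by (simp add: list_weight_def shift_cols_def power_add power_mult_distrib)
qed

lemma list_weight_single: "list_weight x y z [(0, int t)] = x * y * (y * z) ^ t"
  by (simp add: list_weight_def h_list_def c_list_def power_mult_distrib)

lemma list_weight_nonneg: "0 \<le> x \<Longrightarrow> 0 \<le> y \<Longrightarrow> 0 \<le> z \<Longrightarrow> 0 \<le> list_weight x y z cs"
  by (simp add: list_weight_def)

lemma has_sum_add_col_weights:
  fixes x y z :: real
  assumes "\<bar>y * z\<bar> < 1" "cs \<in> cpu_lists" "I \<subseteq> {..c_list cs}"
  shows "((\<lambda>p. list_weight x y z (add_col (cs, p))) has_sum
           x * list_weight x y 1 cs * (\<Sum>i\<in>I. z ^ i) / (1 - y * z)) (I \<times> UNIV)"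
proof -
  have "finite I" using assms(3) finite_subset by blast
  then have "((\<lambda>(i, u). z ^ i * (y * z) ^ u) has_sum (\<Sum>i\<in>I. z ^ i) * (1 / (1 - y * z))) (I \<times> UNIV)"
    by (intro has_sum_times_real has_sum_finite has_sum_geometric assms(1))
  from has_sum_cmult_right[OF this, of "x * list_weight x y 1 cs"]
  have "((\<lambda>(i, u). x * list_weight x y 1 cs * (z ^ i * (y * z) ^ u)) has_sum
          x * list_weight x y 1 cs * (\<Sum>i\<in>I. z ^ i) / (1 - y * z)) (I \<times> UNIV)"
    by (simp add: case_prod_unfold)
  then show ?thesis
    by (rule has_sum_cong[THEN iffD1, rotated])
       (use assms in \<open>auto simp: list_weight_add_col simp del: add_col.simps\<close>)
qed

lemma has_sum_add_col_lift_weights: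
  fixes x y z :: real
  assumes "\<bar>y * z\<bar> < 1" "cs \<in> grounded_lists"
  shows "((\<lambda>p. list_weight x y z (add_col_lift (cs, p))) has_sum
           x * list_weight x y z cs * (y * z) / (1 - y * z)\<^sup>2) (UNIV \<times> {1..})"
proof -
  have "((\<lambda>(u, d). (y * z) ^ u * (y * z) ^ d) has_sum 1 / (1 - y * z) * (y * z / (1 - y * z)))
          (UNIV \<times> {1..})"
    using assms(1) by (intro has_sum_times_real has_sum_geometric has_sum_geometric_from_1) auto
  from has_sum_cmult_right[OF this, of "x * list_weight x y z cs"]
  have "((\<lambda>(u, d). x * list_weight x y z cs * ((y * z) ^ u * (y * z) ^ d)) has_sum
          x * list_weight x y z cs * (y * z) / (1 - y * z)\<^sup>2) (UNIV \<times> {1..})"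
    by (simp add: case_prod_unfold power2_eq_square)
  then show ?thesis
    by (rule has_sum_cong[THEN iffD1, rotated])
       (use assms in \<open>auto simp: list_weight_add_col_lift simp del: add_col_lift.simps\<close>)
qed

lemma has_sum_single_cols:
  fixes x y z :: real
  assumes "\<bar>y * z\<bar> < 1"
  shows "(list_weight x y z has_sum x * y / (1 - y * z)) single_cols"
proof -
  have "((\<lambda>t. x * y * (y * z) ^ t) has_sum x * y * (1 / (1 - y * z))) UNIV"
    using has_sum_cmult_right[OF has_sum_geometric[OF assms]] by simp
  then have "((list_weight x y z \<circ> (\<lambda>t::nat. [(0, int t)])) has_sum x * y / (1 - y * z)) UNIV"
    by (simp add: o_def list_weight_single)
  moreover have "inj (\<lambda>t::nat. [(0, int t)])" by (rule injI) auto
  ultimately show ?thesis unfolding single_cols_def using has_sum_reindex by blast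
qed

(* The factors by which add_col and add_col_lift multiply the weight of a class of lists at z = 2. *)
lemma column_growth_le_half:
  fixes X Y :: real
  assumes "0 \<le> X" "X \<le> 1/100" "0 \<le> Y" "Y \<le> 1/100"
  shows "2 * X / (1 - Y * 2) + X * (Y * 2) / (1 - Y * 2)\<^sup>2 \<le> 1/2"
proof -
  define D where "D = 1 - Y * 2"
  have D: "49/50 \<le> D" using assms by (simp add: D_def)
  have "(49/50)\<^sup>2 \<le> D\<^sup>2" using D by (intro power_mono) auto
  then have D2: "9/10 \<le> D\<^sup>2" by (simp add: power2_eq_square)
  have "X * (Y * 2) \<le> 1/100 * (1/50)" using assms by (intro mult_mono) auto
  then have "X * (Y * 2) / D\<^sup>2 \<le> 1/4" using D2 by (simp add: divide_le_eq)
  moreover have "2 * X / D \<le> 1/4" using D assms by (simp add: divide_le_eq)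
  ultimately show ?thesis by (simp add: D_def)
qed

lemma sum_power_two_le: "(\<Sum>i\<le>c. (2::real) ^ i) \<le> 2 * 2 ^ c"
  by (induction c) auto

lemma has_sum_add_col_image_le:
  fixes X Y :: real
  assumes XY: "0 \<le> X" "0 \<le> Y" "Y < 1/2"
    and A: "A \<subseteq> cpu_lists" and S: "(list_weight X Y 2 has_sum S) A"
  shows "\<exists>S'. (list_weight X Y 2 has_sum S') (add_col ` add_col_params A) \<and> S' \<le> 2 * X / (1 - Y * 2) * S"
proof -
  define W where "W = list_weight X Y 2"
  have W_nonneg: "0 \<le> W cs" for cs using XY by (simp add: W_def list_weight_nonneg)
  define g where "g cs = X * list_weight X Y 1 cs * (\<Sum>i\<le>c_list cs. 2 ^ i) / (1 - Y * 2)" for cs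
  have g_nonneg: "0 \<le> g cs" for cs using XY by (simp add: g_def list_weight_nonneg sum_nonneg)
  have g_le: "g cs \<le> 2 * X / (1 - Y * 2) * W cs" for cs
  proof -
    have "g cs \<le> X * list_weight X Y 1 cs * (2 * 2 ^ c_list cs) / (1 - Y * 2)"
      unfolding g_def using XY sum_power_two_le
      by (intro divide_right_mono mult_left_mono) (auto simp: list_weight_nonneg)
    also have "\<dots> = 2 * X / (1 - Y * 2) * W cs" by (simp add: W_def list_weight_def)
    finally show ?thesis .
  qed
  have "(\<lambda>cs. 2 * X / (1 - Y * 2) * W cs) summable_on A"
    unfolding W_def by (rule summable_on_cmult_right[OF has_sum_imp_summable[OF S]])
  then have "g summable_on A" by (rule summable_on_comparison_test) (use g_le g_nonneg in auto)
  then have g_sum: "(g has_sum infsum g A) A" by (rule has_sum_infsum)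
  have "(W has_sum infsum g A) (add_col ` add_col_params A)"
    unfolding add_col_params_def
  proof (rule has_sum_image_SigmaI_nonneg[OF _ _ g_sum])
    show "inj_on add_col (SIGMA cs:A. {..c_list cs} \<times> UNIV)"
      using inj_add_col by (rule inj_on_subset) simp
    show "((\<lambda>p. W (add_col (cs, p))) has_sum g cs) ({..c_list cs} \<times> UNIV)" if "cs \<in> A" for cs
      using has_sum_add_col_weights[of Y 2 cs "{..c_list cs}" X] XY that A by (auto simp: g_def W_def)
  qed (use W_nonneg in auto)
  moreover have "infsum g A \<le> 2 * X / (1 - Y * 2) * S"
    using has_sum_mono[OF g_sum has_sum_cmult_right[OF S[folded W_def]] g_le] .
  ultimately show ?thesis unfolding W_def by blast
qed

lemma has_sum_add_col_lift_image_le: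
  fixes X Y :: real
  assumes XY: "0 \<le> X" "0 \<le> Y" "Y < 1/2" and S: "(list_weight X Y 2 has_sum S) A"
  shows "\<exists>S'. (list_weight X Y 2 has_sum S') (add_col_lift ` add_col_lift_params A)
    \<and> S' \<le> X * (Y * 2) / (1 - Y * 2)\<^sup>2 * S"
proof -
  define W where "W = list_weight X Y 2"
  define K where "K = X * (Y * 2) / (1 - Y * 2)\<^sup>2"
  have W_nonneg: "0 \<le> W cs" for cs using XY by (simp add: W_def list_weight_nonneg)
  define SF where "SF = infsum W (A \<inter> grounded_lists)"
  have SF: "(W has_sum SF) (A \<inter> grounded_lists)"
    unfolding SF_def W_def
    by (rule has_sum_infsum, rule summable_on_subset[OF has_sum_imp_summable[OF S]]) auto
  have "(W has_sum K * SF) (add_col_lift ` add_col_lift_params A)"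
    unfolding add_col_lift_params_def
  proof (rule has_sum_image_SigmaI_nonneg[OF _ _ has_sum_cmult_right[OF SF]])
    show "inj_on add_col_lift (SIGMA cs:A \<inter> grounded_lists. UNIV \<times> {1..})"
      using inj_on_add_col_lift[of A] by (simp add: add_col_lift_params_def)
    show "((\<lambda>p. W (add_col_lift (cs, p))) has_sum K * W cs) (UNIV \<times> {1..})"
      if "cs \<in> A \<inter> grounded_lists" for cs
      using has_sum_add_col_lift_weights[of Y 2 cs X] XY that by (simp add: K_def W_def mult_ac)
  qed (use W_nonneg in auto)
  moreover have "K * SF \<le> K * S"
    using has_sum_mono_neutral[OF SF S[folded W_def]] W_nonneg XY by (intro mult_left_mono) (auto simp: K_def)
  ultimately show ?thesis unfolding W_def K_def by blast
qed

lemma has_sum_length_Suc_Suc_le_half: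
  fixes X Y :: real
  assumes XY: "0 \<le> X" "X \<le> 1/100" "0 \<le> Y" "Y \<le> 1/100"
    and S: "(list_weight X Y 2 has_sum S) {cs \<in> cpu_lists. length cs = Suc n}"
  shows "\<exists>S'. (list_weight X Y 2 has_sum S') {cs \<in> cpu_lists. length cs = Suc (Suc n)} \<and> S' \<le> S / 2"
proof -
  define A where "A = {cs \<in> cpu_lists. length cs = Suc n}"
  have "A \<subseteq> cpu_lists" by (auto simp: A_def)
  have Y: "Y < 1/2" using XY by simp
  obtain S1 where S1: "(list_weight X Y 2 has_sum S1) (add_col ` add_col_params A)"
    "S1 \<le> 2 * X / (1 - Y * 2) * S"
    using has_sum_add_col_image_le[OF XY(1,3) Y \<open>A \<subseteq> cpu_lists\<close> S[folded A_def]] by blast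
  obtain S2 where S2: "(list_weight X Y 2 has_sum S2) (add_col_lift ` add_col_lift_params A)"
    "S2 \<le> X * (Y * 2) / (1 - Y * 2)\<^sup>2 * S"
    using has_sum_add_col_lift_image_le[OF XY(1,3) Y S[folded A_def]] by blast
  have "(list_weight X Y 2 has_sum S1 + S2) {cs \<in> cpu_lists. length cs = Suc (Suc n)}"
    unfolding cpu_lists_length_Suc_Suc A_def[symmetric]
    by (rule has_sum_Un_disjoint[OF S1(1) S2(1) add_col_disjoint_add_col_lift[OF \<open>A \<subseteq> cpu_lists\<close>,
            where I = "\<lambda>cs. {..c_list cs} \<times> UNIV", folded add_col_params_def]])
  moreover have "S1 + S2 \<le> S / 2"
  proof -
    have "0 \<le> S" using has_sum_nonneg[OF S] XY list_weight_nonneg by simp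
    have "S1 + S2 \<le> (2 * X / (1 - Y * 2) + X * (Y * 2) / (1 - Y * 2)\<^sup>2) * S"
      using S1(2) S2(2) by (simp add: algebra_simps)
    also have "\<dots> \<le> S / 2"
      using mult_right_mono[OF column_growth_le_half[OF XY] \<open>0 \<le> S\<close>] by simp
    finally show ?thesis .
  qed
  ultimately show ?thesis by blast
qed

lemma has_sum_length_le_power_half:
  fixes X Y :: real
  assumes XY: "0 \<le> X" "X \<le> 1/100" "0 \<le> Y" "Y \<le> 1/100"
  shows "\<exists>S. (list_weight X Y 2 has_sum S) {cs \<in> cpu_lists. length cs = Suc n} \<and> S \<le> (1/2) ^ n"
proof (induction n)
  case 0
  have "\<bar>Y * 2\<bar> < 1" using XY by simp
  then have "(list_weight X Y 2 has_sum X * Y / (1 - Y * 2)) {cs \<in> cpu_lists. length cs = Suc 0}"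
    using has_sum_single_cols by (simp add: single_cols_eq)
  moreover have "X * Y / (1 - Y * 2) \<le> 1"
  proof -
    have "X * Y \<le> 1/100 * (1/100)" using XY by (intro mult_mono) auto
    then show ?thesis using XY by (simp add: divide_le_eq)
  qed
  ultimately show ?case by auto
next
  case (Suc n)
  then obtain S where "(list_weight X Y 2 has_sum S) {cs \<in> cpu_lists. length cs = Suc n}" "S \<le> (1/2) ^ n"
    by blast
  with has_sum_length_Suc_Suc_le_half[OF XY this(1)] show ?case by fastforce
qed

lemma list_weight_summable:
  fixes x y z :: real
  assumes "\<bar>x\<bar> \<le> 1/100" "\<bar>y\<bar> \<le> 1/100" "\<bar>z\<bar> \<le> 2"
  shows "list_weight x y z summable_on cpu_lists"
proof -
  define W where "W = list_weight \<bar>x\<bar> \<bar>y\<bar> 2"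
  define L where "L n = {cs \<in> cpu_lists. length cs = Suc n}" for n
  have L: "(W has_sum infsum W (L n)) (L n) \<and> infsum W (L n) \<le> (1/2) ^ n" for n
    using has_sum_length_le_power_half[of "\<bar>x\<bar>" "\<bar>y\<bar>" n] assms
    by (auto simp: W_def L_def infsumI has_sum_imp_summable)
  have W_nonneg: "0 \<le> W cs" for cs by (simp add: W_def list_weight_nonneg)
  have "W summable_on (\<Union>n. L n)"
  proof (rule summable_on_UnionI[where g = "\<lambda>n. infsum W (L n)"])
    have "(\<lambda>n. (1/2::real) ^ n) summable_on UNIV"
      using has_sum_geometric[of "1/2"] has_sum_imp_summable by auto
    then show "(\<lambda>n. infsum W (L n)) summable_on UNIV"
      by (rule summable_on_comparison_test) (use L W_nonneg in \<open>auto intro: infsum_nonneg\<close>)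
  qed (use L W_nonneg in \<open>auto simp: disjoint_family_on_def L_def\<close>)
  moreover have "(\<Union>n. L n) = cpu_lists"
    using cpu_lists_nonempty by (auto simp: L_def) (metis length_greater_0_conv Suc_pred)
  ultimately have "W summable_on cpu_lists" by simp
  moreover have "norm (list_weight x y z cs) \<le> W cs" for cs
  proof -
    have "\<bar>z\<bar> ^ c_list cs \<le> 2 ^ c_list cs" using assms by (intro power_mono) auto
    then show ?thesis by (auto simp: W_def list_weight_def abs_mult power_abs intro!: mult_left_mono)
  qed
  ultimately have "(\<lambda>cs. norm (list_weight x y z cs)) summable_on cpu_lists"
    by (rule Infinite_Sum.abs_summable_on_comparison_test')
  then show ?thesis using summable_on_iff_abs_summable_on_real by blast
qed

section \<open>Functional equations\<close>

definition cpu_gf :: "real \<Rightarrow> real \<Rightarrow> real \<Rightarrow> real" where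
  "cpu_gf x y z = infsum (list_weight x y z) cpu_lists"

definition grounded_gf :: "real \<Rightarrow> real \<Rightarrow> real \<Rightarrow> real" where
  "grounded_gf x y z = infsum (list_weight x y z) grounded_lists"

context
  fixes x y z :: real
  assumes small: "\<bar>x\<bar> \<le> 1/100" "\<bar>y\<bar> \<le> 1/100" "\<bar>z\<bar> \<le> 2"
begin

lemma abs_yz_le: "\<bar>y * z\<bar> \<le> 1/50"
proof -
  have "\<bar>y\<bar> * \<bar>z\<bar> \<le> 1/100 * 2" using small by (intro mult_mono) auto
  then show ?thesis by (simp add: abs_mult)
qed

lemma list_weight_summable_on_subset: "A \<subseteq> cpu_lists \<Longrightarrow> list_weight x y z summable_on A"
  using list_weight_summable[OF small] summable_on_subset by blast

lemma has_sum_add_col_lift_part: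
  "(list_weight x y z has_sum x * y * z * grounded_gf x y z / (1 - y * z)\<^sup>2)
     (add_col_lift ` add_col_lift_params cpu_lists)"
  unfolding add_col_lift_params_def
proof (rule has_sum_image_Sigma)
  show "list_weight x y z summable_on add_col_lift ` (SIGMA cs:cpu_lists \<inter> grounded_lists. UNIV \<times> {1..})"
    using add_col_lift_in_grounded_lists grounded_lists_subset
    by (intro list_weight_summable_on_subset) auto
  show "inj_on add_col_lift (SIGMA cs:cpu_lists \<inter> grounded_lists. UNIV \<times> {1..})"
    using inj_on_add_col_lift[of cpu_lists] by (simp add: add_col_lift_params_def)
  show "((\<lambda>p. list_weight x y z (add_col_lift (cs, p))) has_sum
          x * y * z / (1 - y * z)\<^sup>2 * list_weight x y z cs) (UNIV \<times> {1..})"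
    if "cs \<in> cpu_lists \<inter> grounded_lists" for cs
    using has_sum_add_col_lift_weights[of y z cs x] abs_yz_le that by (simp add: mult_ac)
  have "(list_weight x y z has_sum grounded_gf x y z) (cpu_lists \<inter> grounded_lists)"
    using grounded_lists_subset list_weight_summable_on_subset
    by (simp add: Int_absorb1 grounded_gf_def)
  from has_sum_cmult_right[OF this, of "x * y * z / (1 - y * z)\<^sup>2"]
  show "((\<lambda>cs. x * y * z / (1 - y * z)\<^sup>2 * list_weight x y z cs) has_sum
          x * y * z * grounded_gf x y z / (1 - y * z)\<^sup>2) (cpu_lists \<inter> grounded_lists)"
    by simp
qed

lemma has_sum_add_col_grounded_part:
  "(list_weight x y z has_sum x * grounded_gf x y z / (1 - y * z))
     (add_col ` Sigma grounded_lists (\<lambda>cs. {c_list cs} \<times> UNIV))"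
proof (rule has_sum_image_Sigma)
  show "list_weight x y z summable_on add_col ` Sigma grounded_lists (\<lambda>cs. {c_list cs} \<times> UNIV)"
    using add_col_in_cpu_lists grounded_lists_subset by (intro list_weight_summable_on_subset) auto
  show "inj_on add_col (Sigma grounded_lists (\<lambda>cs. {c_list cs} \<times> UNIV))"
    using inj_add_col by (rule inj_on_subset) simp
  show "((\<lambda>p. list_weight x y z (add_col (cs, p))) has_sum
          x / (1 - y * z) * list_weight x y z cs) ({c_list cs} \<times> UNIV)"
    if "cs \<in> grounded_lists" for cs
    using has_sum_add_col_weights[of y z cs "{c_list cs}" x] abs_yz_le that grounded_lists_subset
    by (auto simp: list_weight_def mult.assoc)
  have "(list_weight x y z has_sum grounded_gf x y z) grounded_lists"
    using grounded_lists_subset list_weight_summable_on_subset by (simp add: grounded_gf_def)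
  from has_sum_cmult_right[OF this, of "x / (1 - y * z)"]
  show "((\<lambda>cs. x / (1 - y * z) * list_weight x y z cs) has_sum
          x * grounded_gf x y z / (1 - y * z)) grounded_lists"
    by simp
qed

lemma grounded_gf_equation:
  "grounded_gf x y z = x * y / (1 - y * z) + x * grounded_gf x y z / (1 - y * z)
     + x * y * z * grounded_gf x y z / (1 - y * z)\<^sup>2"
proof -
  have "(list_weight x y z has_sum x * y / (1 - y * z) + (x * grounded_gf x y z / (1 - y * z)
     + x * y * z * grounded_gf x y z / (1 - y * z)\<^sup>2))
     (single_cols \<union> (add_col ` Sigma grounded_lists (\<lambda>cs. {c_list cs} \<times> UNIV)
       \<union> add_col_lift ` add_col_lift_params cpu_lists))"
    using abs_yz_le grounded_lists_subset
    by (intro has_sum_Un_disjoint[OF has_sum_single_cols]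
        has_sum_Un_disjoint[OF has_sum_add_col_grounded_part has_sum_add_col_lift_part]
        single_cols_disjoint_add_col add_col_disjoint_add_col_lift) auto
  then have "(list_weight x y z has_sum x * y / (1 - y * z) + (x * grounded_gf x y z / (1 - y * z)
     + x * y * z * grounded_gf x y z / (1 - y * z)\<^sup>2)) grounded_lists"
    by (subst grounded_lists_decomp) (simp add: Un_assoc)
  then have "infsum (list_weight x y z) grounded_lists = x * y / (1 - y * z)
     + (x * grounded_gf x y z / (1 - y * z) + x * y * z * grounded_gf x y z / (1 - y * z)\<^sup>2)"
    by (rule infsumI)
  then show ?thesis by (simp only: grounded_gf_def[symmetric] add.assoc)
qed

lemma one_minus_yz_nonzero: "1 - y * z \<noteq> 0"
  using abs_yz_le by auto

lemma has_sum_cpu_gf: "(list_weight x y z has_sum cpu_gf x y z) cpu_lists"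
  using list_weight_summable_on_subset[of cpu_lists] by (simp add: cpu_gf_def)

lemma add_col_part_equation:
  "infsum (list_weight x y z) (add_col ` add_col_params cpu_lists) * ((1 - z) * (1 - y * z))
     = x * (cpu_gf x y 1 - z * cpu_gf x y z)"
proof -
  define T where "T = infsum (list_weight x y z) (add_col ` add_col_params cpu_lists)"
  define g where "g cs = x * list_weight x y 1 cs * (\<Sum>i\<le>c_list cs. z ^ i) / (1 - y * z)" for cs
  have "list_weight x y z summable_on add_col ` add_col_params cpu_lists"
    using add_col_in_cpu_lists by (intro list_weight_summable_on_subset) (auto simp: add_col_params_def)
  then have "(list_weight x y z has_sum T) (add_col ` add_col_params cpu_lists)"
    unfolding T_def by (rule has_sum_infsum)
  then have "(g has_sum T) cpu_lists"
    unfolding add_col_params_def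
  proof (rule has_sum_image_SigmaD)
    show "inj_on add_col (SIGMA cs:cpu_lists. {..c_list cs} \<times> UNIV)"
      using inj_add_col by (rule inj_on_subset) simp
    show "((\<lambda>p. list_weight x y z (add_col (cs, p))) has_sum g cs) ({..c_list cs} \<times> UNIV)"
      if "cs \<in> cpu_lists" for cs
      using has_sum_add_col_weights[of y z cs "{..c_list cs}" x] abs_yz_le that by (simp add: g_def)
  qed
  from has_sum_cmult_left[OF this, of "(1 - z) * (1 - y * z)"]
  have "((\<lambda>cs. x * (list_weight x y 1 cs - z * list_weight x y z cs)) has_sum T * ((1 - z) * (1 - y * z)))
          cpu_lists"
  proof (rule has_sum_cong[THEN iffD1, rotated])
    fix cs
    have geometric: "(\<Sum>i\<le>c_list cs. z ^ i) * (1 - z) = 1 - z ^ Suc (c_list cs)"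
      using one_diff_power_eq[of z "Suc (c_list cs)"] by (simp add: lessThan_Suc_atMost mult.commute)
    have "g cs * ((1 - z) * (1 - y * z)) = x * list_weight x y 1 cs * ((\<Sum>i\<le>c_list cs. z ^ i) * (1 - z))"
      unfolding g_def using one_minus_yz_nonzero by (simp add: field_simps)
    also have "\<dots> = x * list_weight x y 1 cs * (1 - z ^ Suc (c_list cs))"
      by (simp only: geometric)
    also have "\<dots> = x * (list_weight x y 1 cs - z * list_weight x y z cs)"
      by (simp add: list_weight_def algebra_simps)
    finally show "g cs * ((1 - z) * (1 - y * z)) = x * (list_weight x y 1 cs - z * list_weight x y z cs)" .
  qed
  moreover have "((\<lambda>cs. x * (list_weight x y 1 cs - z * list_weight x y z cs)) has_sum
      x * (cpu_gf x y 1 - z * cpu_gf x y z)) cpu_lists"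
  proof -
    have "(list_weight x y 1 has_sum cpu_gf x y 1) cpu_lists"
      using small list_weight_summable[of x y 1] by (simp add: cpu_gf_def)
    from has_sum_add[OF this has_sum_cmult_right[OF has_sum_cpu_gf, of "- z"]]
    show ?thesis using has_sum_cmult_right by fastforce
  qed
  ultimately show ?thesis using has_sum_unique unfolding T_def by blast
qed

lemma cpu_gf_equation:
  "cpu_gf x y z * ((1 - z) * (1 - y * z)) = x * y * (1 - z) + x * (cpu_gf x y 1 - z * cpu_gf x y z)
     + x * y * z * (1 - z) * grounded_gf x y z / (1 - y * z)"
proof -
  define T where "T = infsum (list_weight x y z) (add_col ` add_col_params cpu_lists)"
  define A where "A = 1 - y * z"
  have "A \<noteq> 0" using one_minus_yz_nonzero by (simp add: A_def)
  have "list_weight x y z summable_on add_col ` add_col_params cpu_lists"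
    using add_col_in_cpu_lists by (intro list_weight_summable_on_subset) (auto simp: add_col_params_def)
  then have "(list_weight x y z has_sum x * y / (1 - y * z) + (T + x * y * z * grounded_gf x y z / (1 - y * z)\<^sup>2))
     (single_cols \<union> (add_col ` add_col_params cpu_lists \<union> add_col_lift ` add_col_lift_params cpu_lists))"
    unfolding T_def add_col_params_def using abs_yz_le
    by (intro has_sum_Un_disjoint[OF has_sum_single_cols] has_sum_Un_disjoint[OF _ has_sum_add_col_lift_part]
        has_sum_infsum single_cols_disjoint_add_col add_col_disjoint_add_col_lift) auto
  then have "(list_weight x y z has_sum x * y / (1 - y * z) + (T + x * y * z * grounded_gf x y z / (1 - y * z)\<^sup>2))
     cpu_lists"
    by (subst cpu_lists_decomp) (simp add: Un_assoc)
  with has_sum_cpu_gf have C: "cpu_gf x y z = x * y / A + T + x * y * z * grounded_gf x y z / A\<^sup>2"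
    using has_sum_unique by (fastforce simp: A_def)
  have "cpu_gf x y z * ((1 - z) * A)
      = x * y / A * ((1 - z) * A) + T * ((1 - z) * A) + x * y * z * grounded_gf x y z / A\<^sup>2 * ((1 - z) * A)"
    unfolding C by (simp only: distrib_right)
  also have "\<dots> = x * y * (1 - z) + T * ((1 - z) * A) + x * y * z * (1 - z) * grounded_gf x y z / A"
    using \<open>A \<noteq> 0\<close> by (simp add: field_simps power2_eq_square)
  finally show ?thesis using add_col_part_equation by (simp add: T_def A_def)
qed

lemma cpu_gf_kernel_equation:
  "cpu_gf x y z * ((1 - z) * (1 - y * z) + x * z)
     = x * y * (1 - z) + x * cpu_gf x y 1 + x\<^sup>2 * y\<^sup>2 * z * (1 - z) / ((1 - y * z)\<^sup>2 - x)"
proof -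
  define A where "A = 1 - y * z"
  define F where "F = grounded_gf x y z"
  have "49/50 \<le> A" using abs_yz_le by (simp add: A_def)
  then have "(49/50)\<^sup>2 \<le> A\<^sup>2" by (intro power_mono) auto
  then have A: "A \<noteq> 0" "0 < A\<^sup>2 - x" using small \<open>49/50 \<le> A\<close> by (auto simp: power2_eq_square)
  have "F = x * y / A + x * F / A + x * y * z * F / A\<^sup>2"
    using grounded_gf_equation by (simp add: A_def F_def)
  then have "F * A\<^sup>2 = (x * y / A + x * F / A + x * y * z * F / A\<^sup>2) * A\<^sup>2" by simp
  also have "\<dots> = x * y * A + x * F * A + x * y * z * F"
    using A by (simp add: field_simps power2_eq_square)
  finally have "F * A\<^sup>2 = x * y * A + x * F * A + x * y * z * F" .
  then have "F * (A\<^sup>2 - x) = x * y * A" by (simp add: A_def algebra_simps power2_eq_square)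
  then have "F = x * y * A / (A\<^sup>2 - x)" using A by (simp add: eq_divide_eq)
  then have "x * y * z * (1 - z) * F / A = x * y * z * (1 - z) * (x * y * A / (A\<^sup>2 - x)) / A" by simp
  also have "\<dots> = x\<^sup>2 * y\<^sup>2 * z * (1 - z) / (A\<^sup>2 - x)"
    using A by (simp add: field_simps power2_eq_square)
  finally have "x * y * z * (1 - z) * F / A = x\<^sup>2 * y\<^sup>2 * z * (1 - z) / (A\<^sup>2 - x)" .
  then show ?thesis using cpu_gf_equation by (simp add: A_def F_def algebra_simps)
qed

end

section \<open>Kernel method\<close>

lemma z0_kernel_root:
  fixes x y :: real
  assumes "\<bar>x\<bar> \<le> 1/100" "\<bar>y\<bar> \<le> 1/100" "y \<noteq> 0"
  shows "\<bar>z0 x y\<bar> \<le> 2" "(1 - z0 x y) * (1 - y * z0 x y) + x * z0 x y = 0"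
proof -
  define b where "b = 1 + y - x"
  define s where "s = sqrt (b\<^sup>2 - 4 * y)"
  have b: "49/50 \<le> b" using assms by (auto simp: b_def)
  then have "(49/50)\<^sup>2 \<le> b\<^sup>2" by (intro power_mono) auto
  then have disc: "(9/10)\<^sup>2 \<le> b\<^sup>2 - 4 * y" using assms by (simp add: power2_eq_square abs_le_iff)
  then have s: "9/10 \<le> s" unfolding s_def by (rule real_le_rsqrt)
  have "0 \<le> b\<^sup>2 - 4 * y" using disc by (rule order_trans[rotated]) simp
  then have s2: "s\<^sup>2 = b\<^sup>2 - 4 * y" by (simp add: s_def)
  have z0: "2 * y * z0 x y = b - s" using assms(3) by (simp add: z0_def b_def s_def)
  have "(b - s) * (b + s) = 4 * y" using s2 by (simp add: algebra_simps power2_eq_square)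
  then have "2 * y * (z0 x y * (b + s)) = 2 * y * 2" by (simp add: z0 mult.assoc[symmetric])
  then have "z0 x y * (b + s) = 2" using assms(3) by simp
  then have "z0 x y = 2 / (b + s)" using b s by (simp add: eq_divide_eq)
  moreover have "2 / (b + s) \<le> 2" "0 \<le> 2 / (b + s)" using b s by (auto simp: divide_le_eq)
  ultimately show "\<bar>z0 x y\<bar> \<le> 2" by simp
  have "(b - 2 * y * z0 x y)\<^sup>2 = b\<^sup>2 - 4 * y" using z0 s2 by simp
  then have "4 * y * (y * (z0 x y)\<^sup>2 - b * z0 x y + 1) = 0" by (simp add: algebra_simps power2_eq_square)
  then have "y * (z0 x y)\<^sup>2 - b * z0 x y + 1 = 0" using assms(3) by simp
  then show "(1 - z0 x y) * (1 - y * z0 x y) + x * z0 x y = 0"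
    by (simp add: b_def algebra_simps power2_eq_square)
qed

lemma cpu_gf_closed_form:
  fixes x y z :: real
  assumes "\<bar>x\<bar> \<le> 1/100" "\<bar>y\<bar> \<le> 1/100" "y \<noteq> 0" "\<bar>z\<bar> \<le> 1/100"
  shows "cpu_gf x y z = (x * y * (z0 x y - z) + x\<^sup>2 * y\<^sup>2 * z * (1 - z) / ((1 - y * z)\<^sup>2 - x)
          - x\<^sup>2 * y\<^sup>2 * z0 x y * (1 - z0 x y) / ((1 - y * z0 x y)\<^sup>2 - x))
        / ((1 - z) * (1 - y * z) + x * z)"
proof -
  have "0 = x * y * (1 - z0 x y) + x * cpu_gf x y 1
      + x\<^sup>2 * y\<^sup>2 * z0 x y * (1 - z0 x y) / ((1 - y * z0 x y)\<^sup>2 - x)"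
    using cpu_gf_kernel_equation[OF assms(1,2) z0_kernel_root(1)[OF assms(1-3)]]
      z0_kernel_root(2)[OF assms(1-3)] by simp
  moreover have "cpu_gf x y z * ((1 - z) * (1 - y * z) + x * z) = x * y * (1 - z) + x * cpu_gf x y 1
      + x\<^sup>2 * y\<^sup>2 * z * (1 - z) / ((1 - y * z)\<^sup>2 - x)"
    using assms by (intro cpu_gf_kernel_equation) auto
  ultimately have "cpu_gf x y z * ((1 - z) * (1 - y * z) + x * z) = x * y * (z0 x y - z)
      + x\<^sup>2 * y\<^sup>2 * z * (1 - z) / ((1 - y * z)\<^sup>2 - x)
      - x\<^sup>2 * y\<^sup>2 * z0 x y * (1 - z0 x y) / ((1 - y * z0 x y)\<^sup>2 - x)"
    by (simp add: algebra_simps)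
  moreover have "(1 - z) * (1 - y * z) + x * z \<noteq> 0"
  proof -
    have "\<bar>y\<bar> * \<bar>z\<bar> \<le> 1/100 * (1/100)" "\<bar>x\<bar> * \<bar>z\<bar> \<le> 1/100 * (1/100)"
      using assms by (intro mult_mono; simp)+
    then have "\<bar>y * z\<bar> \<le> 1/100 * (1/100)" "\<bar>x * z\<bar> \<le> 1/100 * (1/100)"
      by (simp_all add: abs_mult)
    moreover from this have "(99/100) * (9999/10000) \<le> (1 - z) * (1 - y * z)"
      using assms by (intro mult_mono) auto
    ultimately show ?thesis by auto
  qed
  ultimately show ?thesis by (simp add: eq_divide_eq)
qed

lemma list_weight_eq_stats:
  assumes "cs \<in> cpu_lists"
  shows "list_weight x y z cs = x ^ v_stat (cells cs) * y ^ h_stat (cells cs) * z ^ c_stat (cells cs)"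
  using stats_cells[OF assms] by (simp add: list_weight_def)

lemma has_sum_CPu:
  fixes x y z :: real
  assumes "\<bar>x\<bar> \<le> 1/100" "\<bar>y\<bar> \<le> 1/100" "\<bar>z\<bar> \<le> 2"
  shows "((\<lambda>P. x ^ v_stat P * y ^ h_stat P * z ^ c_stat P) has_sum cpu_gf x y z) CPu"
proof -
  have "((\<lambda>cs. x ^ v_stat (cells cs) * y ^ h_stat (cells cs) * z ^ c_stat (cells cs)) has_sum cpu_gf x y z)
      cpu_lists"
    using has_sum_cpu_gf[OF assms] by (rule has_sum_cong[THEN iffD1, rotated]) (simp add: list_weight_eq_stats)
  then show ?thesis using has_sum_reindex_bij_betw[OF bij_betw_cells] by blast
qed

theorem lemma3p2:
  "\<exists>\<epsilon>>0. \<forall>x y z :: real. \<bar>x\<bar> < \<epsilon> \<and> \<bar>y\<bar> < \<epsilon> \<and> y \<noteq> 0 \<and> \<bar>z\<bar> < \<epsilon> \<longrightarrow>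
     ((\<lambda>P. x ^ v_stat P * y ^ h_stat P * 1 ^ a_stat P * z ^ c_stat P) has_sum
       ((x*y*(z0 x y - z) + x^2*y^2*z*(1-z) / ((1-y*z)^2 - x)
          - x^2*y^2*z0 x y*(1 - z0 x y) / ((1 - y*z0 x y)^2 - x))
        / ((1-z)*(1-y*z) + x*z))) CPu"
proof (intro exI[of _ "1/100"] conjI allI impI)
  fix x y z :: real
  assume "\<bar>x\<bar> < 1/100 \<and> \<bar>y\<bar> < 1/100 \<and> y \<noteq> 0 \<and> \<bar>z\<bar> < 1/100"
  then have small: "\<bar>x\<bar> \<le> 1/100" "\<bar>y\<bar> \<le> 1/100" "y \<noteq> 0" "\<bar>z\<bar> \<le> 1/100" by auto
  then have "((\<lambda>P. x ^ v_stat P * y ^ h_stat P * z ^ c_stat P) has_sum cpu_gf x y z) CPu"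
    by (intro has_sum_CPu) auto
  then show "((\<lambda>P. x ^ v_stat P * y ^ h_stat P * 1 ^ a_stat P * z ^ c_stat P) has_sum
       ((x*y*(z0 x y - z) + x^2*y^2*z*(1-z) / ((1-y*z)^2 - x)
          - x^2*y^2*z0 x y*(1 - z0 x y) / ((1 - y*z0 x y)^2 - x))
        / ((1-z)*(1-y*z) + x*z))) CPu"
    using cpu_gf_closed_form[OF small] by simp
qed simp

end
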